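(* Let $X$ be a topological space and $x \in X$, and suppose player II has a winning strategy $F$ in the game $\mathsf{G}_1(\Omega_x, \Omega_x)$. Let $\mathcal{P}$ be a family such that each element of $\mathcal{P}$ is a centered family of countable subsets of $X$, and such that for every neighborhood $O_x$ of $x$ there exist $\mathcal{B} \in \mathcal{P}$ and $B \in \mathcal{B}$ with $B \subset O_x$. Then there is a family $(\mathcal{B}_s)_{s \in \omega^{<\omega}}$ of elements of $\mathcal{P}$ such that for every choice of $B_s \in \mathcal{B}_s$ for each $s \in \omega^{<\omega}$, and for every $f \in \omega^\omega$, we have $x \in \overline{\bigcup_{s \subset f} B_s}$ (the union over all finite initial segments $s$ of $f$).
   Context: For a point $x$ of a space $X$, $\Omega_x$ denotes the collection of all sets $A \subset X$ such that $x \notin A$ and $x \in \overline{A}$. The game $\mathsf{G}_1(\Omega_x,\Omega_x)$ is played in innings $n \in \omega$: in inning $n$ player I chooses $A_n \in \Omega_x$ and then player II chooses $a_n \in A_n$; player II wins if $\{a_n : n \in \omega\} \in \Omega_x$. A strategy for player II is a function $F$ assigning to each finite nonempty sequence $(D_0,\dots,D_n)$ of elements of $\Omega_x$ a point $F(D_0,\dots,D_n) \in D_n$; it is winning if II wins every play in which she answers according to $F$. A family $\mathcal{F}$ of sets is centered if $A \cap B \neq \emptyset$ for all $A, B \in \mathcal{F}$. *)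

theory Defs
  imports Main "HOL-Analysis.Analysis"
begin

definition Omega_pt :: "'a::topological_space \<Rightarrow> 'a set set" where
  "Omega_pt x = {A. x \<notin> A \<and> x \<in> closure A}"

definition is_strategy_II :: "'a::topological_space \<Rightarrow> ('a set list \<Rightarrow> 'a) \<Rightarrow> bool" where
  "is_strategy_II x F \<longleftrightarrow>
     (\<forall>ds. ds \<noteq> [] \<and> set ds \<subseteq> Omega_pt x \<longrightarrow> F ds \<in> last ds)"

definition winning_strategy_II :: "'a::topological_space \<Rightarrow> ('a set list \<Rightarrow> 'a) \<Rightarrow> bool" where
  "winning_strategy_II x F \<longleftrightarrow> is_strategy_II x F \<and>
     (\<forall>A :: nat \<Rightarrow> 'a set. (\<forall>n. A n \<in> Omega_pt x) \<longrightarrow>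
        {F (map A [0..<Suc n]) | n. True} \<in> Omega_pt x)"

definition centered :: "'a set set \<Rightarrow> bool" where
  "centered \<F> \<longleftrightarrow> (\<forall>A\<in>\<F>. \<forall>B\<in>\<F>. A \<inter> B \<noteq> {})"

end

theory Submission
  imports Defs
begin

text \<open>For every position \<open>\<sigma>\<close> of a play, the points F can answer at \<open>\<sigma>\<close> cover a punctured
  neighbourhood of x: otherwise the unanswerable points would form a legal move of player I,
  and F would have to answer it with one of them.  Choose the sets \<open>B\<^sub>n\<close> one after another so
  that \<open>B\<^sub>n\<close> lies in the finitely many answering neighbourhoods of the positions built from
  the first n points of the first n sets \<open>B\<^sub>m\<close> (each enumerated).  Given \<open>C\<^sub>n\<close> from the families,
  centeredness supplies points \<open>y\<^sub>n \<in> C\<^sub>n \<inter> B\<^sub>n\<close>; along a sparse enough subsequence each \<open>y\<^sub>n\<close>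
  is visible at all later stages, so the subsequence is the sequence of F's answers in a single
  play, whose answers accumulate at x because F is winning.\<close>

definition answers :: "'a::topological_space \<Rightarrow> ('a set list \<Rightarrow> 'a) \<Rightarrow> 'a set list \<Rightarrow> 'a set" where
  "answers x F \<sigma> = (\<lambda>A. F (\<sigma> @ [A])) ` Omega_pt x"

definition move_for :: "'a::topological_space \<Rightarrow> ('a set list \<Rightarrow> 'a) \<Rightarrow> 'a set list \<Rightarrow> 'a \<Rightarrow> 'a set" where
  "move_for x F \<sigma> y = (SOME A. A \<in> Omega_pt x \<and> F (\<sigma> @ [A]) = y)"

definition play_for :: "'a::topological_space \<Rightarrow> ('a set list \<Rightarrow> 'a) \<Rightarrow> 'a list \<Rightarrow> 'a set list" where
  "play_for x F ys = foldl (\<lambda>\<sigma> y. \<sigma> @ [move_for x F \<sigma> y]) [] ys"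

text \<open>The fallback \<open>UNIV\<close> only occurs at positions that are not legal.\<close>
definition answer_nhd :: "'a::topological_space \<Rightarrow> ('a set list \<Rightarrow> 'a) \<Rightarrow> 'a set list \<Rightarrow> 'a set" where
  "answer_nhd x F \<sigma> =
     (if \<exists>U. open U \<and> x \<in> U \<and> U - {x} \<subseteq> answers x F \<sigma>
      then SOME U. open U \<and> x \<in> U \<and> U - {x} \<subseteq> answers x F \<sigma> else UNIV)"

definition initial_points :: "'a set list \<Rightarrow> 'a set" where
  "initial_points Bs = {from_nat_into (Bs ! m) k | m k. m < length Bs \<and> k < length Bs}"

definition common_answer_nhd :: "'a::topological_space \<Rightarrow> ('a set list \<Rightarrow> 'a) \<Rightarrow> 'a set list \<Rightarrow> 'a set" where
  "common_answer_nhd x F Bs =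
     \<Inter> ((\<lambda>ys. answer_nhd x F (play_for x F ys)) `
        {ys. set ys \<subseteq> initial_points Bs \<and> length ys \<le> length Bs})"

lemma move_for_answer:
  assumes "y \<in> answers x F \<sigma>"
  shows "move_for x F \<sigma> y \<in> Omega_pt x" "F (\<sigma> @ [move_for x F \<sigma> y]) = y"
proof -
  have "\<exists>A. A \<in> Omega_pt x \<and> F (\<sigma> @ [A]) = y"
    using assms unfolding answers_def by blast
  from someI_ex[OF this] show "move_for x F \<sigma> y \<in> Omega_pt x" "F (\<sigma> @ [move_for x F \<sigma> y]) = y"
    unfolding move_for_def by blast+
qed

lemma play_for_snoc: "play_for x F (ys @ [y]) = play_for x F ys @ [move_for x F (play_for x F ys) y]"
  by (simp add: play_for_def)

lemma answers_nhd:
  assumes "is_strategy_II x F" "set \<sigma> \<subseteq> Omega_pt x"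
  shows "\<exists>U. open U \<and> x \<in> U \<and> U - {x} \<subseteq> answers x F \<sigma>"
proof -
  define N where "N = - answers x F \<sigma> - {x}"
  have "x \<notin> closure N"
  proof
    assume "x \<in> closure N"
    then have N: "N \<in> Omega_pt x" unfolding Omega_pt_def N_def by auto
    then have "\<sigma> @ [N] \<noteq> [] \<and> set (\<sigma> @ [N]) \<subseteq> Omega_pt x" using assms(2) by simp
    then have "F (\<sigma> @ [N]) \<in> last (\<sigma> @ [N])"
      using assms(1) unfolding is_strategy_II_def by blast
    moreover have "F (\<sigma> @ [N]) \<in> answers x F \<sigma>" using N unfolding answers_def by blast
    ultimately show False unfolding N_def by simp
  qed
  moreover have "- closure N - {x} \<subseteq> answers x F \<sigma>"
    using closure_subset[of N] unfolding N_def by blast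
  ultimately show ?thesis by (intro exI[of _ "- closure N"]) auto
qed

lemma open_answer_nhd: "open (answer_nhd x F \<sigma>)" "x \<in> answer_nhd x F \<sigma>"
  using someI_ex[of "\<lambda>U. open U \<and> x \<in> U \<and> U - {x} \<subseteq> answers x F \<sigma>"]
  unfolding answer_nhd_def by auto

lemma answer_nhd_subset:
  assumes "is_strategy_II x F" "set \<sigma> \<subseteq> Omega_pt x"
  shows "answer_nhd x F \<sigma> - {x} \<subseteq> answers x F \<sigma>"
  using someI_ex[OF answers_nhd[OF assms]] answers_nhd[OF assms]
  unfolding answer_nhd_def by auto

lemma winning_closure_answers:
  assumes "winning_strategy_II x F"
    and "\<And>i. z i \<noteq> x"
    and "\<And>i. z i \<in> answer_nhd x F (play_for x F (map z [0..<i]))"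
  shows "x \<in> closure (range z)"
proof -
  have strategy: "is_strategy_II x F"
    using assms(1) unfolding winning_strategy_II_def by blast
  define A where "A i = move_for x F (play_for x F (map z [0..<i])) (z i)" for i
  have play: "play_for x F (map z [0..<i]) = map A [0..<i]" for i
    by (induction i) (simp_all add: play_for_snoc A_def, simp add: play_for_def)
  have answer: "z i \<in> answers x F (map A [0..<i])" if "\<forall>j<i. A j \<in> Omega_pt x" for i
  proof -
    have "set (map A [0..<i]) \<subseteq> Omega_pt x" using that by auto
    moreover have "z i \<in> answer_nhd x F (map A [0..<i]) - {x}"
      using assms(2,3)[of i] play[of i] by simp
    ultimately show ?thesis using answer_nhd_subset[OF strategy] by blast
  qed
  have A_play: "A i = move_for x F (map A [0..<i]) (z i)" for i
    by (subst A_def) (simp only: play)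
  have legal: "A i \<in> Omega_pt x" for i
  proof (induction i rule: less_induct)
    case (less i)
    then show ?case using move_for_answer(1)[OF answer] A_play[of i] by simp
  qed
  have "F (map A [0..<Suc i]) = z i" for i
    using move_for_answer(2)[OF answer] legal A_play[of i] by simp
  then have "{F (map A [0..<Suc n]) | n. True} = range z" by auto
  moreover have "{F (map A [0..<Suc n]) | n. True} \<in> Omega_pt x"
    using assms(1) legal unfolding winning_strategy_II_def by blast
  ultimately show ?thesis unfolding Omega_pt_def by simp
qed

lemma finite_initial_points: "finite (initial_points Bs)"
proof -
  have "initial_points Bs =
      (\<lambda>(m, k). from_nat_into (Bs ! m) k) ` ({..<length Bs} \<times> {..<length Bs})"
    unfolding initial_points_def by auto
  then show ?thesis by simp
qed

lemma open_common_answer_nhd: "open (common_answer_nhd x F Bs)" "x \<in> common_answer_nhd x F Bs"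
  unfolding common_answer_nhd_def
  by (intro open_INT finite_lists_length_le finite_initial_points ballI open_answer_nhd)
    (auto simp: open_answer_nhd)

lemma common_answer_nhd_subset:
  "set ys \<subseteq> initial_points Bs \<Longrightarrow> length ys \<le> length Bs \<Longrightarrow>
    common_answer_nhd x F Bs \<subseteq> answer_nhd x F (play_for x F ys)"
  unfolding common_answer_nhd_def by blast

lemma dependent_choice_history:
  assumes "\<And>xs. \<exists>y. Q xs y"
  shows "\<exists>f. \<forall>n. Q (map f [0..<n]) (f n)"
proof -
  define h where "h = rec_nat [] (\<lambda>_ xs. xs @ [SOME y. Q xs y])"
  define f where "f n = (SOME y. Q (h n) y)" for n
  have "h n = map f [0..<n]" for n
    by (induction n) (simp_all add: h_def f_def)
  then show ?thesis
    using someI_ex[OF assms] unfolding f_def by metis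
qed

lemma diagonal_subsequence:
  fixes g :: "nat \<Rightarrow> nat"
  shows "\<exists>r. strict_mono r \<and> (\<forall>i. g (r i) < r (Suc i))"
proof -
  define r where "r = rec_nat 0 (\<lambda>_ a. max a (g a) + 1)"
  have "r (Suc i) = max (r i) (g (r i)) + 1" for i
    unfolding r_def by simp
  then show ?thesis
    by (intro exI[of _ r]) (auto simp: strict_mono_Suc_iff)
qed

lemma closure_guarded_selection:
  assumes "winning_strategy_II x F"
    and "\<And>n. countable (B n)"
    and "\<And>n. B n \<subseteq> common_answer_nhd x F (map B [0..<n])"
    and "\<And>n. y n \<in> B n"
  shows "x \<in> closure (range y)"
proof (cases "x \<in> range y")
  case True
  then show ?thesis using closure_subset by (rule subsetD[rotated])
next
  case False
  have "\<forall>n. \<exists>i. from_nat_into (B n) i = y n"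
    using from_nat_into_surj[OF assms(2) assms(4)] by blast
  then obtain k where k: "\<And>n. from_nat_into (B n) (k n) = y n" by metis
  obtain r where r: "strict_mono r" "\<And>i. k (r i) < r (Suc i)"
    using diagonal_subsequence by blast
  define z where "z i = y (r i)" for i
  have "z i \<in> answer_nhd x F (play_for x F (map z [0..<i]))" for i
  proof -
    have "set (map z [0..<i]) \<subseteq> initial_points (map B [0..<r i])"
    proof
      fix p assume "p \<in> set (map z [0..<i])"
      then obtain j where j: "j < i" "p = y (r j)" unfolding z_def by auto
      have "r j < r i" using strict_mono_less[OF r(1)] j(1) by simp
      moreover have "k (r j) < r i"
        using r(2)[of j] strict_mono_less_eq[OF r(1), of "Suc j" i] j(1) by simp
      ultimately show "p \<in> initial_points (map B [0..<r i])"
        unfolding initial_points_def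
        by (intro CollectI exI[of _ "r j"] exI[of _ "k (r j)"]) (simp add: j(2) k)
    qed
    moreover have "length (map z [0..<i]) \<le> length (map B [0..<r i])"
      using strict_mono_imp_increasing[OF r(1)] by simp
    ultimately have "B (r i) \<subseteq> answer_nhd x F (play_for x F (map z [0..<i]))"
      using assms(3) common_answer_nhd_subset by blast
    then show ?thesis using assms(4) unfolding z_def by blast
  qed
  moreover have "z i \<noteq> x" for i using False unfolding z_def by auto
  ultimately have "x \<in> closure (range z)" using winning_closure_answers[OF assms(1)] by blast
  moreover have "range z \<subseteq> range y" unfolding z_def by auto
  ultimately show ?thesis using closure_mono by blast
qed

theorem theorem2p2:
  fixes x :: "'a::topological_space"
    and F :: "'a set list \<Rightarrow> 'a"
    and P :: "'a set set set"
  assumes "winning_strategy_II x F"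
    and "\<forall>\<B>\<in>P. centered \<B> \<and> (\<forall>B\<in>\<B>. countable B)"
    and "\<forall>U. open U \<and> x \<in> U \<longrightarrow> (\<exists>\<B>\<in>P. \<exists>B\<in>\<B>. B \<subseteq> U)"
  shows "\<exists>\<B>s :: nat list \<Rightarrow> 'a set set. (\<forall>s. \<B>s s \<in> P) \<and>
           (\<forall>Bs :: nat list \<Rightarrow> 'a set. (\<forall>s. Bs s \<in> \<B>s s) \<longrightarrow>
              (\<forall>f :: nat \<Rightarrow> nat. x \<in> closure (\<Union>n. Bs (map f [0..<n]))))"
proof -
  define good where "good ps q \<longleftrightarrow>
      fst q \<in> P \<and> snd q \<in> fst q \<and> snd q \<subseteq> common_answer_nhd x F (map snd ps)"
    for ps :: "('a set set \<times> 'a set) list" and q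
  have "\<exists>q. good ps q" for ps
  proof -
    obtain \<B> B where "\<B> \<in> P" "B \<in> \<B>" "B \<subseteq> common_answer_nhd x F (map snd ps)"
      using assms(3) open_common_answer_nhd[of x F "map snd ps"] by blast
    then show ?thesis unfolding good_def by (intro exI[of _ "(\<B>, B)"]) simp
  qed
  then obtain p where p: "\<And>n. good (map p [0..<n]) (p n)"
    using dependent_choice_history[of good] by blast
  have fam: "fst (p n) \<in> P" and set: "snd (p n) \<in> fst (p n)"
    and guarded: "snd (p n) \<subseteq> common_answer_nhd x F (map (\<lambda>n. snd (p n)) [0..<n])" for n
    using p[of n] unfolding good_def by (simp_all add: comp_def)
  show ?thesis
  proof (intro exI[of _ "\<lambda>s. fst (p (length s))"] conjI allI impI)
    fix Bs :: "nat list \<Rightarrow> 'a set" and f :: "nat \<Rightarrow> nat"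
    assume Bs: "\<forall>s. Bs s \<in> fst (p (length s))"
    have "\<forall>n. \<exists>z. z \<in> Bs (map f [0..<n]) \<inter> snd (p n)"
    proof
      fix n
      have "Bs (map f [0..<n]) \<in> fst (p n)" using Bs[rule_format, of "map f [0..<n]"] by simp
      moreover have "centered (fst (p n))" using assms(2) fam by blast
      ultimately show "\<exists>z. z \<in> Bs (map f [0..<n]) \<inter> snd (p n)"
        using set unfolding centered_def by blast
    qed
    then obtain y where y: "\<And>n. y n \<in> Bs (map f [0..<n]) \<inter> snd (p n)"
      by (rule choice[THEN exE]) blast
    have "countable (snd (p n))" for n using assms(2) fam set by blast
    then have "x \<in> closure (range y)"
      by (rule closure_guarded_selection[OF assms(1) _ guarded]) (use y in blast)
    moreover have "range y \<subseteq> (\<Union>n. Bs (map f [0..<n]))" using y by blast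
    ultimately show "x \<in> closure (\<Union>n. Bs (map f [0..<n]))" using closure_mono by blast
  qed (rule fam)
qed

end
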